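(* Let $p$ be a fixed odd prime. For every $\epsilon>0$ there exists $c>0$ such that for every $n$, if $f:\mathbb{F}_p^n\to[-1,1]$ satisfies $\|f\|_{U^2}\le c$, $a\in[-1,1]$ is a constant, and $g(x)=a+f(x)$ for every $x\in\mathbb{F}_p^n$, then $\bigl|\|g\|_{U^3}^8-(a^8+\|f\|_{U^3}^8)\bigr|\le\epsilon$.
   Context: For real-valued $f$ on $\mathbb{F}_p^n$ and $k\ge2$, $\|f\|_{U^k}^{2^k}=\mathbb{E}_{x,h_1,\dots,h_k\in\mathbb{F}_p^n}\prod_{\omega\in\{0,1\}^k}f(x+\omega_1h_1+\dots+\omega_kh_k)$ (uniform averages). *)

theory Defs
  imports "HOL-Analysis.Analysis" "HOL-Computational_Algebra.Primes"
begin

text \<open>The vector space F_p^n is modelled as the set of functions {..<n} -> {0..<p}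
  (extensional, undefined outside {..<n}), with coordinatewise addition mod p.\<close>

definition Fpn :: "nat \<Rightarrow> nat \<Rightarrow> (nat \<Rightarrow> nat) set" where
  "Fpn p n = PiE {..<n} (\<lambda>_. {0..<p})"

definition vadd :: "nat \<Rightarrow> nat \<Rightarrow> (nat \<Rightarrow> nat) \<Rightarrow> (nat \<Rightarrow> nat) \<Rightarrow> (nat \<Rightarrow> nat)" where
  "vadd p n x y = restrict (\<lambda>i. (x i + y i) mod p) {..<n}"

fun cube_point :: "nat \<Rightarrow> nat \<Rightarrow> (nat \<Rightarrow> nat) \<Rightarrow> (nat \<Rightarrow> bool) \<Rightarrow> (nat \<Rightarrow> (nat \<Rightarrow> nat)) \<Rightarrow> nat \<Rightarrow> (nat \<Rightarrow> nat)" where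
  "cube_point p n x \<omega> h 0 = x"
| "cube_point p n x \<omega> h (Suc j) =
     (if \<omega> j then vadd p n (cube_point p n x \<omega> h j) (h j) else cube_point p n x \<omega> h j)"

text \<open>||f||_{U^k}^{2^k}: uniform average over x, h_1..h_k in F_p^n of the product over
  omega in {0,1}^k of f(x + omega.h).\<close>

definition gowers_pow :: "nat \<Rightarrow> nat \<Rightarrow> nat \<Rightarrow> ((nat \<Rightarrow> nat) \<Rightarrow> real) \<Rightarrow> real" where
  "gowers_pow p n k f =
     (\<Sum>x\<in>Fpn p n. \<Sum>h\<in>PiE {..<k} (\<lambda>_. Fpn p n).
        \<Prod>\<omega>\<in>PiE {..<k} (\<lambda>_. (UNIV :: bool set)). f (cube_point p n x \<omega> h k))
     / real (card (Fpn p n)) ^ (k + 1)"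

definition gowers_norm :: "nat \<Rightarrow> nat \<Rightarrow> nat \<Rightarrow> ((nat \<Rightarrow> nat) \<Rightarrow> real) \<Rightarrow> real" where
  "gowers_norm p n k f = gowers_pow p n k f powr (1 / 2 ^ k)"

end

theory Submission
  imports Defs
begin

text \<open>
  Expanding \<open>\<Prod>\<^sub>\<omega> (a + f (x + \<omega>\<cdot>h))\<close> over the eight corners \<open>\<omega>\<close> of the cube writes
  \<open>N\<^sup>4 \<parallel>g\<parallel>\<^sub>U\<^sub>3\<^sup>8\<close> as \<open>\<Sum>\<^sub>S a\<^bsup>8 - |S|\<^esup> T(S)\<close>, where \<open>T(S)\<close> sums \<open>\<Prod>\<^sub>\<omega>\<^sub>\<in>\<^sub>S f (x + \<omega>\<cdot>h)\<close>
  over \<open>x, h\<close>; the sets \<open>S = {}\<close> and \<open>S = {0,1}\<^sup>3\<close> give \<open>a\<^sup>8\<close> and \<open>\<parallel>f\<parallel>\<^sub>U\<^sub>3\<^sup>8\<close>.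
  Any other \<open>S\<close> can be moved by a symmetry of the cube so that it avoids the corner
  \<open>(1,1,1)\<close> but meets the face \<open>\<omega>\<^sub>3 = 1\<close>. Summing over \<open>h\<^sub>3\<close> first, that face contributes
  \<open>\<alpha>(y) \<beta>(y + h\<^sub>1) \<gamma>(y + h\<^sub>2)\<close> with \<open>\<alpha>, \<beta>, \<gamma> \<in> {f, 1}\<close> not all \<open>1\<close>, and Cauchy-Schwarz
  in \<open>(h\<^sub>1, h\<^sub>2)\<close> and then in the shift \<open>d\<close> of the autocorrelation \<open>\<Sum>\<^sub>x f(x) f(x + d)\<close>
  gives \<open>|T(S)| \<le> N\<^sup>4 \<parallel>f\<parallel>\<^sub>U\<^sub>2\<close>. So the 254 mixed terms contribute at most \<open>256 \<parallel>f\<parallel>\<^sub>U\<^sub>2\<close>.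
\<close>

lemma bij_betw_PiE_pair:
  fixes A :: "'a set"
  shows "bij_betw (\<lambda>h. (h 0, h 1)) (PiE {..<2::nat} (\<lambda>_. A)) (A \<times> A)"
proof -
  define g :: "'a \<times> 'a \<Rightarrow> nat \<Rightarrow> 'a" where "g = (\<lambda>(a, b). restrict (\<lambda>i. if i = 0 then a else b) {..<2::nat})"
  have "g (h 0, h 1) = h" if "h \<in> PiE {..<2::nat} (\<lambda>_. A)" for h
    using that by (auto simp: g_def PiE_iff extensional_def fun_eq_iff less_2_cases_iff)
  then show ?thesis
    by (intro bij_betwI[where g = g]) (force simp: g_def PiE_iff)+
qed

lemma bij_betw_PiE_triple:
  fixes A :: "'a set"
  shows "bij_betw (\<lambda>h. (h 0, h 1, h 2)) (PiE {..<3::nat} (\<lambda>_. A)) (A \<times> A \<times> A)"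
proof -
  define g :: "'a \<times> 'a \<times> 'a \<Rightarrow> nat \<Rightarrow> 'a"
    where "g = (\<lambda>(a, b, c). restrict (\<lambda>i. if i = 0 then a else if i = 1 then b else c) {..<3::nat})"
  have "i < 3 \<longleftrightarrow> i = 0 \<or> i = 1 \<or> i = (2::nat)" for i
    by auto
  then have "g (h 0, h 1, h 2) = h" if "h \<in> PiE {..<3::nat} (\<lambda>_. A)" for h
    using that by (auto simp: g_def PiE_iff extensional_def fun_eq_iff)
  then show ?thesis
    by (intro bij_betwI[where g = g]) (force simp: g_def PiE_iff)+
qed

lemma sum_PiE_pair:
  "(\<Sum>h\<in>PiE {..<2::nat} (\<lambda>_. A). G (h 0) (h 1)) = (\<Sum>a\<in>A. \<Sum>b\<in>A. G a b)"
  using sum.reindex_bij_betw[OF bij_betw_PiE_pair, of "\<lambda>(a, b). G a b"]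
  by (simp add: sum.cartesian_product)

lemma sum_PiE_triple:
  "(\<Sum>h\<in>PiE {..<3::nat} (\<lambda>_. A). G (h 0) (h 1) (h 2)) = (\<Sum>a\<in>A. \<Sum>b\<in>A. \<Sum>c\<in>A. G a b c)"
  using sum.reindex_bij_betw[OF bij_betw_PiE_triple, of "\<lambda>(a, b, c). G a b c"]
  by (simp add: sum.cartesian_product)

lemma prod_PiE_pair:
  "(\<Prod>\<omega>\<in>PiE {..<2::nat} (\<lambda>_. UNIV). G (\<omega> 0) (\<omega> 1)) = (\<Prod>w\<in>UNIV. G (fst w) (snd w))"
  using prod.reindex_bij_betw[OF bij_betw_PiE_pair, of "\<lambda>w. G (fst w) (snd w)" UNIV] by simp

lemma prod_PiE_triple:
  "(\<Prod>\<omega>\<in>PiE {..<3::nat} (\<lambda>_. UNIV). G (\<omega> 0) (\<omega> 1) (\<omega> 2)) = (\<Prod>w\<in>UNIV. G (fst w) (fst (snd w)) (snd (snd w)))"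
  using prod.reindex_bij_betw[OF bij_betw_PiE_triple, of "\<lambda>w. G (fst w) (fst (snd w)) (snd (snd w))" UNIV] by simp

lemma prod_UNIV_bool_pair:
  "(\<Prod>w\<in>UNIV. g w) = g (False, False) * g (True, False) * g (False, True) * g (True, True)"
  by (simp add: UNIV_bool mult_ac flip: UNIV_Times_UNIV)

lemma prod_UNIV_bool_triple:
  "(\<Prod>w\<in>UNIV. g w) = g (False, False, False) * g (True, False, False) * g (False, True, False) *
     g (True, True, False) * g (False, False, True) * g (True, False, True) * g (False, True, True) *
     g (True, True, True)"
  by (simp add: UNIV_bool mult_ac flip: UNIV_Times_UNIV)

lemma sum_swap_pairs:
  "(\<Sum>a\<in>A. \<Sum>b\<in>B. \<Sum>c\<in>C. \<Sum>d\<in>D. f a b c d) = (\<Sum>c\<in>C. \<Sum>d\<in>D. \<Sum>a\<in>A. \<Sum>b\<in>B. f a b c d)"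
proof -
  have "(\<Sum>a\<in>A. \<Sum>b\<in>B. \<Sum>c\<in>C. \<Sum>d\<in>D. f a b c d) = (\<Sum>a\<in>A. \<Sum>c\<in>C. \<Sum>b\<in>B. \<Sum>d\<in>D. f a b c d)"
    by (rule sum.cong[OF refl], rule sum.swap)
  also have "\<dots> = (\<Sum>c\<in>C. \<Sum>a\<in>A. \<Sum>d\<in>D. \<Sum>b\<in>B. f a b c d)"
    by (subst sum.swap, rule sum.cong[OF refl], rule sum.cong[OF refl], rule sum.swap)
  also have "\<dots> = (\<Sum>c\<in>C. \<Sum>d\<in>D. \<Sum>a\<in>A. \<Sum>b\<in>B. f a b c d)"
    by (rule sum.cong[OF refl], rule sum.swap)
  finally show ?thesis .
qed

lemma square_double_sum_abs_le:
  fixes B :: "'a \<Rightarrow> 'a \<Rightarrow> real"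
  shows "(\<Sum>a\<in>A. \<Sum>b\<in>A. \<bar>B a b\<bar>)\<^sup>2 \<le> real (card A) ^ 2 * (\<Sum>a\<in>A. \<Sum>b\<in>A. (B a b)\<^sup>2)"
  using sum_squared_le_sum_of_squares[of "\<lambda>w. \<bar>B (fst w) (snd w)\<bar>" "A \<times> A"]
  by (simp add: sum.cartesian_product card_cartesian_product split_def power2_eq_square mult_ac)

type_synonym corner = "bool \<times> bool \<times> bool"

definition flip1 :: "corner \<Rightarrow> corner" where "flip1 = (\<lambda>(i, j, k). (\<not> i, j, k))"
definition flip2 :: "corner \<Rightarrow> corner" where "flip2 = (\<lambda>(i, j, k). (i, \<not> j, k))"
definition flip3 :: "corner \<Rightarrow> corner" where "flip3 = (\<lambda>(i, j, k). (i, j, \<not> k))"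
definition swap12 :: "corner \<Rightarrow> corner" where "swap12 = (\<lambda>(i, j, k). (j, i, k))"
definition swap23 :: "corner \<Rightarrow> corner" where "swap23 = (\<lambda>(i, j, k). (i, k, j))"

lemmas corner_maps_def = flip1_def flip2_def flip3_def swap12_def swap23_def

lemma inj_flip1: "inj flip1"
  and inj_swap12: "inj swap12"
  and inj_swap23: "inj swap23"
  by (auto simp: inj_def corner_maps_def)

text \<open>\<open>flip1\<close>, \<open>swap12\<close> and \<open>swap23\<close> generate the symmetry group of the cube.\<close>

definition cube_invariant :: "(corner set \<Rightarrow> 'a) \<Rightarrow> bool" where
  "cube_invariant \<Phi> \<longleftrightarrow> (\<forall>S. \<Phi> (flip1 ` S) = \<Phi> S \<and> \<Phi> (swap12 ` S) = \<Phi> S \<and> \<Phi> (swap23 ` S) = \<Phi> S)"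

lemma cube_invariant_flips:
  assumes "cube_invariant \<Phi>"
  shows "\<Phi> (flip1 ` S) = \<Phi> S" "\<Phi> (flip2 ` S) = \<Phi> S" "\<Phi> (flip3 ` S) = \<Phi> S"
proof -
  have inv: "\<Phi> (flip1 ` T) = \<Phi> T" "\<Phi> (swap12 ` T) = \<Phi> T" "\<Phi> (swap23 ` T) = \<Phi> T" for T
    using assms by (simp_all add: cube_invariant_def)
  have conjugates: "flip2 = swap12 \<circ> flip1 \<circ> swap12" "flip3 = swap23 \<circ> swap12 \<circ> flip1 \<circ> swap12 \<circ> swap23"
    by (auto simp: corner_maps_def)
  show "\<Phi> (flip1 ` S) = \<Phi> S" "\<Phi> (flip2 ` S) = \<Phi> S" "\<Phi> (flip3 ` S) = \<Phi> S"
    by (simp_all only: conjugates image_comp[symmetric] inv)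
qed

lemma cube_invariant_avoid_top:
  assumes "cube_invariant \<Phi>" "S \<noteq> {}" "S \<noteq> UNIV"
  obtains S' where "(True, True, True) \<notin> S'" "S' \<noteq> {}" "\<Phi> S' = \<Phi> S"
proof -
  obtain i j k where ijk: "(i, j, k) \<notin> S"
    using \<open>S \<noteq> UNIV\<close> by auto
  define m1 where "m1 = (if i then id else flip1)"
  define m2 where "m2 = (if j then id else flip2)"
  define m3 where "m3 = (if k then id else flip3)"
  have "\<Phi> (m1 ` T) = \<Phi> T" "\<Phi> (m2 ` T) = \<Phi> T" "\<Phi> (m3 ` T) = \<Phi> T" for T
    using cube_invariant_flips[OF assms(1)] by (simp_all add: m1_def m2_def m3_def)
  then have "\<Phi> (m1 ` m2 ` m3 ` S) = \<Phi> S"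
    by simp
  moreover have "m1 (m2 (m3 w)) = (True, True, True) \<Longrightarrow> w = (i, j, k)" for w
    by (cases w) (auto simp: m1_def m2_def m3_def corner_maps_def split: if_splits)
  then have "(True, True, True) \<notin> m1 ` m2 ` m3 ` S"
    using ijk by auto
  ultimately show ?thesis
    using that \<open>S \<noteq> {}\<close> by blast
qed

lemma cube_invariant_normalize:
  assumes "cube_invariant \<Phi>" "S \<noteq> {}" "S \<noteq> UNIV"
  obtains S' where "(True, True, True) \<notin> S'" "\<exists>w\<in>S'. snd (snd w)" "\<Phi> S' = \<Phi> S"
proof -
  obtain S1 where top: "(True, True, True) \<notin> S1" and "S1 \<noteq> {}" and "\<Phi> S1 = \<Phi> S"
    using cube_invariant_avoid_top[OF assms] .
  have swaps: "\<Phi> (swap23 ` S1) = \<Phi> S1" "\<Phi> (swap23 ` swap12 ` S1) = \<Phi> S1"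
    using assms(1) by (simp_all add: cube_invariant_def)
  have "S1 = {(False, False, False)}" if "\<forall>w\<in>S1. \<not> fst w \<and> \<not> fst (snd w) \<and> \<not> snd (snd w)"
    using that \<open>S1 \<noteq> {}\<close> by (auto simp: prod_eq_iff)
  then consider (third) "\<exists>w\<in>S1. snd (snd w)" | (second) "\<exists>w\<in>S1. fst (snd w)" | (first) "\<exists>w\<in>S1. fst w"
    | (origin) "S1 = {(False, False, False)}"
    by blast
  then show ?thesis
  proof cases
    case third
    with top that show ?thesis
      using \<open>\<Phi> S1 = \<Phi> S\<close> by blast
  next
    case second
    with top that[of "swap23 ` S1"] show ?thesis
      using swaps \<open>\<Phi> S1 = \<Phi> S\<close> by (force simp: swap23_def)
  next
    case first
    with top that[of "swap23 ` swap12 ` S1"] show ?thesis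
      using swaps \<open>\<Phi> S1 = \<Phi> S\<close> by (force simp: swap12_def swap23_def)
  next
    case origin
    then have "flip3 ` S1 = {(False, False, True)}"
      by (simp add: flip3_def)
    moreover have "\<Phi> (flip3 ` S1) = \<Phi> S"
      using cube_invariant_flips(3)[OF assms(1)] \<open>\<Phi> S1 = \<Phi> S\<close> by simp
    ultimately show ?thesis
      using that[of "flip3 ` S1"] by simp
  qed
qed

locale Fpn_space =
  fixes p n :: nat
  assumes p_pos: "0 < p"
begin

abbreviation V :: "(nat \<Rightarrow> nat) set" where "V \<equiv> Fpn p n"

abbreviation plus_V :: "(nat \<Rightarrow> nat) \<Rightarrow> (nat \<Rightarrow> nat) \<Rightarrow> nat \<Rightarrow> nat" (infixl "\<oplus>" 65)
  where "x \<oplus> y \<equiv> vadd p n x y"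

abbreviation N :: real where "N \<equiv> real (card V)"

definition zero_V :: "nat \<Rightarrow> nat" where "zero_V = restrict (\<lambda>i. 0) {..<n}"

definition uminus_V :: "(nat \<Rightarrow> nat) \<Rightarrow> nat \<Rightarrow> nat" where
  "uminus_V x = restrict (\<lambda>i. (p - x i) mod p) {..<n}"

lemma mem_V_iff: "x \<in> V \<longleftrightarrow> (\<forall>i<n. x i < p) \<and> (\<forall>i\<ge>n. x i = undefined)"
  by (auto simp: Fpn_def PiE_def extensional_def Pi_def)

lemma plus_V_closed [simp]: "x \<oplus> y \<in> V"
  and zero_V_closed [simp]: "zero_V \<in> V"
  and uminus_V_closed [simp]: "uminus_V x \<in> V"
  using p_pos by (auto simp: mem_V_iff vadd_def zero_V_def uminus_V_def)

lemma plus_V_commute: "x \<oplus> y = y \<oplus> x"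
  by (auto simp: vadd_def add.commute)

lemma plus_V_assoc: "x \<oplus> y \<oplus> z = x \<oplus> (y \<oplus> z)"
  by (auto simp: vadd_def mod_add_left_eq mod_add_right_eq add.assoc)

lemma plus_V_left_commute: "x \<oplus> (y \<oplus> z) = y \<oplus> (x \<oplus> z)"
  by (metis plus_V_assoc plus_V_commute)

lemmas plus_V_ac = plus_V_assoc plus_V_commute plus_V_left_commute

lemma plus_zero_V [simp]: "x \<in> V \<Longrightarrow> x \<oplus> zero_V = x"
  by (auto simp: vadd_def zero_V_def mem_V_iff)

lemma plus_uminus_V [simp]: "x \<in> V \<Longrightarrow> x \<oplus> uminus_V x = zero_V"
  by (rule ext) (auto simp: vadd_def zero_V_def uminus_V_def mem_V_iff mod_add_right_eq)

lemma uminus_uminus_V [simp]: "x \<in> V \<Longrightarrow> uminus_V (uminus_V x) = x"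
  by (rule ext) (auto simp: uminus_V_def mem_V_iff mod_if)

lemma finite_V [simp]: "finite V"
  by (simp add: Fpn_def finite_PiE)

lemma N_pos: "0 < N"
  using zero_V_closed by (metis card_gt_0_iff empty_iff finite_V of_nat_0_less_iff)

lemma sum_translate: "d \<in> V \<Longrightarrow> (\<Sum>x\<in>V. G (x \<oplus> d)) = (\<Sum>x\<in>V. G x)"
  by (rule sum.reindex_bij_betw, rule bij_betwI[where g = "\<lambda>x. x \<oplus> uminus_V d"])
    (auto simp: plus_V_assoc plus_V_commute[of "uminus_V d"])

lemma sum_translate_left: "d \<in> V \<Longrightarrow> (\<Sum>x\<in>V. G (d \<oplus> x)) = (\<Sum>x\<in>V. G x)"
  using sum_translate[of d G] by (simp add: plus_V_commute)

lemma sum_uminus_V: "(\<Sum>x\<in>V. G (uminus_V x)) = (\<Sum>x\<in>V. G x)"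
  by (rule sum.reindex_bij_betw, rule bij_betwI[where g = uminus_V]) auto

lemma sum_shear: "(\<Sum>x\<in>V. \<Sum>a\<in>V. G (x \<oplus> a) (uminus_V a)) = (\<Sum>x\<in>V. \<Sum>a\<in>V. G x a)"
proof -
  have "(\<Sum>x\<in>V. \<Sum>a\<in>V. G (x \<oplus> a) (uminus_V a)) = (\<Sum>a\<in>V. \<Sum>x\<in>V. G (x \<oplus> a) (uminus_V a))"
    by (rule sum.swap)
  also have "\<dots> = (\<Sum>a\<in>V. \<Sum>x\<in>V. G x (uminus_V a))"
    by (rule sum.cong[OF refl], rule sum_translate[where G = "\<lambda>x. G x _"])
  also have "\<dots> = (\<Sum>a\<in>V. \<Sum>x\<in>V. G x a)"
    by (rule sum_uminus_V)
  finally show ?thesis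
    by (rule trans) (rule sum.swap)
qed

definition bool_scale :: "bool \<Rightarrow> (nat \<Rightarrow> nat) \<Rightarrow> nat \<Rightarrow> nat" where
  "bool_scale b h = (if b then h else zero_V)"

definition cube_vertex ::
  "(nat \<Rightarrow> nat) \<Rightarrow> (nat \<Rightarrow> nat) \<Rightarrow> (nat \<Rightarrow> nat) \<Rightarrow> (nat \<Rightarrow> nat) \<Rightarrow> corner \<Rightarrow> nat \<Rightarrow> nat"
  where "cube_vertex x a b c w =
    x \<oplus> bool_scale (fst w) a \<oplus> bool_scale (fst (snd w)) b \<oplus> bool_scale (snd (snd w)) c"

definition cube_sum :: "((nat \<Rightarrow> nat) \<Rightarrow> real) \<Rightarrow> corner set \<Rightarrow> real" where
  "cube_sum F S = (\<Sum>x\<in>V. \<Sum>a\<in>V. \<Sum>b\<in>V. \<Sum>c\<in>V. \<Prod>w\<in>S. F (cube_vertex x a b c w))"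

definition autocorr :: "((nat \<Rightarrow> nat) \<Rightarrow> real) \<Rightarrow> (nat \<Rightarrow> nat) \<Rightarrow> real" where
  "autocorr F d = (\<Sum>x\<in>V. F x * F (x \<oplus> d))"

lemma plus_bool_scale: "x \<in> V \<Longrightarrow> x \<oplus> bool_scale b h = (if b then x \<oplus> h else x)"
  by (simp add: bool_scale_def)

lemma gowers_pow_3_cube_sum: "gowers_pow p n 3 F = cube_sum F UNIV / N ^ 4"
proof -
  have "cube_point p n x \<omega> h 3 = cube_vertex x (h 0) (h 1) (h 2) (\<omega> 0, \<omega> 1, \<omega> 2)"
    if "x \<in> V" for x \<omega> h
    using that by (simp add: eval_nat_numeral cube_vertex_def plus_bool_scale)
  then have prod: "(\<Prod>\<omega>\<in>PiE {..<3} (\<lambda>_. UNIV). F (cube_point p n x \<omega> h 3)) =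
      (\<Prod>w\<in>UNIV. F (cube_vertex x (h 0) (h 1) (h 2) w))" if "x \<in> V" for x h
    using that prod_PiE_triple[of "\<lambda>i j k. F (cube_vertex x (h 0) (h 1) (h 2) (i, j, k))"] by simp
  have "(\<Sum>x\<in>V. \<Sum>h\<in>PiE {..<3} (\<lambda>_. V). \<Prod>\<omega>\<in>PiE {..<3} (\<lambda>_. UNIV). F (cube_point p n x \<omega> h 3))
      = cube_sum F UNIV"
    unfolding cube_sum_def
    by (rule sum.cong[OF refl], simp only: prod, rule sum_PiE_triple)
  then show ?thesis
    by (simp add: gowers_pow_def)
qed

lemma sum_autocorr_square:
  "(\<Sum>d\<in>V. (autocorr F d)\<^sup>2) = (\<Sum>x\<in>V. \<Sum>a\<in>V. \<Sum>b\<in>V. F x * F (x \<oplus> a) * F (x \<oplus> b) * F (x \<oplus> a \<oplus> b))"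
proof -
  have "(\<Sum>d\<in>V. (autocorr F d)\<^sup>2) = (\<Sum>d\<in>V. \<Sum>x\<in>V. \<Sum>y\<in>V. F x * F (x \<oplus> d) * (F y * F (y \<oplus> d)))"
    by (simp add: autocorr_def power2_eq_square sum_product)
  also have "\<dots> = (\<Sum>d\<in>V. \<Sum>x\<in>V. \<Sum>a\<in>V. F x * F (x \<oplus> d) * (F (x \<oplus> a) * F (x \<oplus> a \<oplus> d)))"
    by (rule sum.cong[OF refl], rule sum.cong[OF refl],
        rule sum_translate_left[where G = "\<lambda>y. F _ * F (_ \<oplus> _) * (F y * F (y \<oplus> _))", symmetric])
  also have "\<dots> = (\<Sum>x\<in>V. \<Sum>a\<in>V. \<Sum>d\<in>V. F x * F (x \<oplus> d) * (F (x \<oplus> a) * F (x \<oplus> a \<oplus> d)))"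
    by (subst sum.swap, rule sum.cong[OF refl], rule sum.swap)
  finally show ?thesis
    by (simp add: mult_ac)
qed

lemma gowers_pow_2_autocorr: "gowers_pow p n 2 F = (\<Sum>d\<in>V. (autocorr F d)\<^sup>2) / N ^ 3"
proof -
  have prod: "(\<Prod>\<omega>\<in>PiE {..<2} (\<lambda>_. UNIV). F (cube_point p n x \<omega> h 2)) =
      F x * F (x \<oplus> h 0) * F (x \<oplus> h 1) * F (x \<oplus> h 0 \<oplus> h 1)" for x h
    using prod_PiE_pair[of "\<lambda>i j. F (cube_point p n x (\<lambda>k. if k = 0 then i else j) h 2)"]
    by (simp add: eval_nat_numeral prod_UNIV_bool_pair mult_ac cong: if_cong)
  have "(\<Sum>x\<in>V. \<Sum>h\<in>PiE {..<2} (\<lambda>_. V). \<Prod>\<omega>\<in>PiE {..<2} (\<lambda>_. UNIV). F (cube_point p n x \<omega> h 2))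
      = (\<Sum>d\<in>V. (autocorr F d)\<^sup>2)"
    unfolding sum_autocorr_square
    by (rule sum.cong[OF refl], simp only: prod, rule sum_PiE_pair)
  then show ?thesis
    by (simp add: gowers_pow_def)
qed

lemma autocorr_one: "autocorr (\<lambda>_. 1) d = N"
  by (simp add: autocorr_def)

lemma abs_autocorr_le:
  assumes "\<And>x. x \<in> V \<Longrightarrow> \<bar>f x\<bar> \<le> 1"
  shows "\<bar>autocorr f d\<bar> \<le> N"
proof -
  have "\<bar>autocorr f d\<bar> \<le> (\<Sum>x\<in>V. \<bar>f x\<bar> * \<bar>f (x \<oplus> d)\<bar>)"
    unfolding autocorr_def abs_mult[symmetric] by (rule sum_abs)
  also have "\<dots> \<le> (\<Sum>x\<in>V. 1)"
    by (intro sum_mono mult_le_one) (auto intro: assms)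
  finally show ?thesis
    by simp
qed

lemma sum_square_correlation:
  "(\<Sum>a\<in>V. \<Sum>b\<in>V. (\<Sum>y\<in>V. \<alpha> y * \<beta> (y \<oplus> a) * \<gamma> (y \<oplus> b))\<^sup>2) =
   (\<Sum>d\<in>V. autocorr \<alpha> d * autocorr \<beta> d * autocorr \<gamma> d)"
proof -
  define P where "P a b y = \<alpha> y * \<beta> (y \<oplus> a) * \<gamma> (y \<oplus> b)" for a b y
  define Z where "Z a b d y = \<alpha> y * \<alpha> (y \<oplus> d) * (\<beta> (y \<oplus> a) * \<beta> (y \<oplus> a \<oplus> d)) * (\<gamma> (y \<oplus> b) * \<gamma> (y \<oplus> b \<oplus> d))"
    for a b d y
  have square: "(\<Sum>y\<in>V. P a b y)\<^sup>2 = (\<Sum>d\<in>V. \<Sum>y\<in>V. Z a b d y)" for a b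
  proof -
    have "(\<Sum>y\<in>V. P a b y)\<^sup>2 = (\<Sum>y\<in>V. \<Sum>z\<in>V. P a b y * P a b z)"
      by (simp add: power2_eq_square sum_product)
    also have "\<dots> = (\<Sum>y\<in>V. \<Sum>d\<in>V. P a b y * P a b (y \<oplus> d))"
      by (rule sum.cong[OF refl], rule sum_translate_left[where G = "\<lambda>z. P a b _ * P a b z", symmetric])
    also have "\<dots> = (\<Sum>y\<in>V. \<Sum>d\<in>V. Z a b d y)"
      by (simp add: P_def Z_def plus_V_ac mult_ac)
    finally show ?thesis
      by (rule trans) (rule sum.swap)
  qed
  have inner: "(\<Sum>a\<in>V. \<Sum>b\<in>V. Z a b d y) = \<alpha> y * \<alpha> (y \<oplus> d) * autocorr \<beta> d * autocorr \<gamma> d"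
    if "y \<in> V" for d y
    using that
    by (simp add: Z_def autocorr_def sum_translate_left[of y "\<lambda>x. \<beta> x * \<beta> (x \<oplus> d)"]
        sum_translate_left[of y "\<lambda>x. \<gamma> x * \<gamma> (x \<oplus> d)"] flip: sum_distrib_left sum_distrib_right)
  have "(\<Sum>a\<in>V. \<Sum>b\<in>V. (\<Sum>y\<in>V. \<alpha> y * \<beta> (y \<oplus> a) * \<gamma> (y \<oplus> b))\<^sup>2) = (\<Sum>d\<in>V. \<Sum>y\<in>V. \<Sum>a\<in>V. \<Sum>b\<in>V. Z a b d y)"
    by (simp only: square flip: P_def) (rule sum_swap_pairs)
  also have "\<dots> = (\<Sum>d\<in>V. autocorr \<alpha> d * autocorr \<beta> d * autocorr \<gamma> d)"
    by (simp add: inner autocorr_def sum_distrib_right)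
  finally show ?thesis .
qed

lemma abs_autocorr_product_le:
  assumes f_bound: "\<And>x. x \<in> V \<Longrightarrow> \<bar>f x\<bar> \<le> 1"
    and "\<alpha> \<in> {f, \<lambda>_. 1}" "\<beta> \<in> {f, \<lambda>_. 1}" "\<gamma> \<in> {f, \<lambda>_. 1}" and "f \<in> {\<alpha>, \<beta>, \<gamma>}"
  shows "\<bar>autocorr \<alpha> d * autocorr \<beta> d * autocorr \<gamma> d\<bar> \<le> N\<^sup>2 * \<bar>autocorr f d\<bar>"
proof -
  have le_N: "\<bar>autocorr X d\<bar> \<le> N" if "X \<in> {f, \<lambda>_. 1}" for X
    using that abs_autocorr_le[OF f_bound] by (auto simp: autocorr_one)
  have "\<bar>autocorr \<alpha> d\<bar> \<le> N" "\<bar>autocorr \<beta> d\<bar> \<le> N" "\<bar>autocorr \<gamma> d\<bar> \<le> N"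
    using assms(2-4) by (auto intro: le_N)
  then have "\<bar>autocorr \<alpha> d\<bar> * (\<bar>autocorr \<beta> d\<bar> * \<bar>autocorr \<gamma> d\<bar>) \<le> \<bar>autocorr \<alpha> d\<bar> * (N * N)"
    "\<bar>autocorr \<beta> d\<bar> * (\<bar>autocorr \<alpha> d\<bar> * \<bar>autocorr \<gamma> d\<bar>) \<le> \<bar>autocorr \<beta> d\<bar> * (N * N)"
    "\<bar>autocorr \<gamma> d\<bar> * (\<bar>autocorr \<alpha> d\<bar> * \<bar>autocorr \<beta> d\<bar>) \<le> \<bar>autocorr \<gamma> d\<bar> * (N * N)"
    by (intro mult_left_mono mult_mono; simp)+
  with assms(5) show ?thesis
    by (auto simp: abs_mult power2_eq_square mult_ac)
qed

lemma abs_sum_split_le: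
  assumes P_bound: "\<And>x a b. x \<in> V \<Longrightarrow> a \<in> V \<Longrightarrow> b \<in> V \<Longrightarrow> \<bar>P x a b\<bar> \<le> 1"
  shows "\<bar>\<Sum>x\<in>V. \<Sum>a\<in>V. \<Sum>b\<in>V. \<Sum>c\<in>V. P x a b * Q (x \<oplus> c) a b\<bar> \<le> N * (\<Sum>a\<in>V. \<Sum>b\<in>V. \<bar>\<Sum>y\<in>V. Q y a b\<bar>)"
proof -
  have "(\<Sum>c\<in>V. P x a b * Q (x \<oplus> c) a b) = P x a b * (\<Sum>y\<in>V. Q y a b)" if "x \<in> V" for x a b
    using sum_translate_left[OF that, of "\<lambda>y. Q y a b"] by (simp flip: sum_distrib_left)
  then have "(\<Sum>x\<in>V. \<Sum>a\<in>V. \<Sum>b\<in>V. \<Sum>c\<in>V. P x a b * Q (x \<oplus> c) a b) =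
      (\<Sum>x\<in>V. \<Sum>a\<in>V. \<Sum>b\<in>V. P x a b * (\<Sum>y\<in>V. Q y a b))"
    by (intro sum.cong refl) auto
  also have "\<dots> = (\<Sum>a\<in>V. \<Sum>b\<in>V. (\<Sum>x\<in>V. P x a b) * (\<Sum>y\<in>V. Q y a b))"
    unfolding sum_distrib_right by (subst sum.swap, rule sum.cong[OF refl], rule sum.swap)
  finally have "\<bar>\<Sum>x\<in>V. \<Sum>a\<in>V. \<Sum>b\<in>V. \<Sum>c\<in>V. P x a b * Q (x \<oplus> c) a b\<bar> =
      \<bar>\<Sum>a\<in>V. \<Sum>b\<in>V. (\<Sum>x\<in>V. P x a b) * (\<Sum>y\<in>V. Q y a b)\<bar>"
    by simp
  also have "\<dots> \<le> (\<Sum>a\<in>V. \<Sum>b\<in>V. \<bar>\<Sum>x\<in>V. P x a b\<bar> * \<bar>\<Sum>y\<in>V. Q y a b\<bar>)"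
    unfolding abs_mult[symmetric] by (rule order_trans[OF sum_abs sum_mono]) (rule sum_abs)
  also have "\<dots> \<le> (\<Sum>a\<in>V. \<Sum>b\<in>V. N * \<bar>\<Sum>y\<in>V. Q y a b\<bar>)"
  proof (intro sum_mono mult_right_mono)
    fix a b assume "a \<in> V" "b \<in> V"
    then have "\<bar>\<Sum>x\<in>V. P x a b\<bar> \<le> (\<Sum>x\<in>V. 1)"
      by (intro order_trans[OF sum_abs] sum_mono P_bound)
    then show "\<bar>\<Sum>x\<in>V. P x a b\<bar> \<le> N"
      by simp
  qed simp
  finally show ?thesis
    by (simp add: sum_distrib_left)
qed

lemma split_sum_pow4_le_gowers:
  assumes f_bound: "\<And>x. x \<in> V \<Longrightarrow> \<bar>f x\<bar> \<le> 1"
    and P_bound: "\<And>x a b. x \<in> V \<Longrightarrow> a \<in> V \<Longrightarrow> b \<in> V \<Longrightarrow> \<bar>P x a b\<bar> \<le> 1"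
    and factors: "\<alpha> \<in> {f, \<lambda>_. 1}" "\<beta> \<in> {f, \<lambda>_. 1}" "\<gamma> \<in> {f, \<lambda>_. 1}" "f \<in> {\<alpha>, \<beta>, \<gamma>}"
  shows "(\<Sum>x\<in>V. \<Sum>a\<in>V. \<Sum>b\<in>V. \<Sum>c\<in>V. P x a b * (\<alpha> (x \<oplus> c) * \<beta> (x \<oplus> c \<oplus> a) * \<gamma> (x \<oplus> c \<oplus> b))) ^ 4
    \<le> N ^ 16 * gowers_pow p n 2 f"
    (is "?T ^ 4 \<le> _")
proof -
  define Q where "Q = (\<Sum>a\<in>V. \<Sum>b\<in>V. \<bar>\<Sum>y\<in>V. \<alpha> y * \<beta> (y \<oplus> a) * \<gamma> (y \<oplus> b)\<bar>)"
  define R where "R = (\<Sum>d\<in>V. \<bar>autocorr f d\<bar>)"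
  have "Q \<ge> 0" "R \<ge> 0"
    by (simp_all add: Q_def R_def sum_nonneg)
  have T_le: "\<bar>?T\<bar> \<le> N * Q"
    unfolding Q_def
    by (rule abs_sum_split_le[where Q = "\<lambda>y a b. \<alpha> y * \<beta> (y \<oplus> a) * \<gamma> (y \<oplus> b)", OF P_bound])
  have "Q\<^sup>2 \<le> N\<^sup>2 * (\<Sum>a\<in>V. \<Sum>b\<in>V. (\<Sum>y\<in>V. \<alpha> y * \<beta> (y \<oplus> a) * \<gamma> (y \<oplus> b))\<^sup>2)"
    unfolding Q_def by (rule square_double_sum_abs_le)
  also have "\<dots> = N\<^sup>2 * (\<Sum>d\<in>V. autocorr \<alpha> d * autocorr \<beta> d * autocorr \<gamma> d)"
    by (simp only: sum_square_correlation)
  also have "\<dots> \<le> N\<^sup>2 * (\<Sum>d\<in>V. N\<^sup>2 * \<bar>autocorr f d\<bar>)"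
    using abs_autocorr_product_le[OF f_bound factors]
    by (intro mult_left_mono sum_mono) (auto intro: order_trans[OF abs_ge_self])
  finally have Q_sq: "Q\<^sup>2 \<le> N ^ 4 * R"
    by (simp add: R_def sum_distrib_left)
  have "R\<^sup>2 \<le> (\<Sum>d\<in>V. (autocorr f d)\<^sup>2) * N"
    unfolding R_def using sum_squared_le_sum_of_squares[of "\<lambda>d. \<bar>autocorr f d\<bar>" V] by simp
  also have "\<dots> = N ^ 4 * gowers_pow p n 2 f"
    unfolding gowers_pow_2_autocorr using N_pos by (simp add: field_simps eval_nat_numeral)
  finally have R_sq: "R\<^sup>2 \<le> N ^ 4 * gowers_pow p n 2 f" .
  have "?T ^ 4 = \<bar>?T\<bar> ^ 4"
    by (simp add: power_even_abs)
  also have "\<dots> \<le> (N * Q) ^ 4"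
    by (rule power_mono[OF T_le abs_ge_zero])
  also have "\<dots> = N ^ 4 * (Q\<^sup>2)\<^sup>2"
    by (simp add: power_mult_distrib flip: power_mult)
  also have "\<dots> \<le> N ^ 4 * (N ^ 4 * R)\<^sup>2"
    using Q_sq \<open>Q \<ge> 0\<close> by (intro mult_left_mono power_mono) auto
  also have "\<dots> = N ^ 12 * R\<^sup>2"
    by (simp add: power_mult_distrib flip: power_mult power_add)
  also have "\<dots> \<le> N ^ 12 * (N ^ 4 * gowers_pow p n 2 f)"
    using R_sq by (intro mult_left_mono) auto
  finally show ?thesis
    by (simp add: mult.assoc flip: power_add)
qed

lemma plus_uminus_cancel [simp]: "x \<in> V \<Longrightarrow> a \<in> V \<Longrightarrow> x \<oplus> a \<oplus> uminus_V a = x"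
  by (simp add: plus_V_assoc)

lemma cube_vertex_flip1: "x \<in> V \<Longrightarrow> a \<in> V \<Longrightarrow> cube_vertex x a b c (flip1 w) = cube_vertex (x \<oplus> a) (uminus_V a) b c w"
  by (cases w) (simp add: cube_vertex_def flip1_def plus_bool_scale)

lemma cube_vertex_swap12: "x \<in> V \<Longrightarrow> cube_vertex x a b c (swap12 w) = cube_vertex x b a c w"
  by (cases w) (simp add: cube_vertex_def swap12_def plus_bool_scale plus_V_ac)

lemma cube_vertex_swap23: "x \<in> V \<Longrightarrow> cube_vertex x a b c (swap23 w) = cube_vertex x a c b w"
  by (cases w) (simp add: cube_vertex_def swap23_def plus_bool_scale plus_V_ac)

lemma cube_sum_image:
  "inj m \<Longrightarrow> cube_sum F (m ` S) = (\<Sum>x\<in>V. \<Sum>a\<in>V. \<Sum>b\<in>V. \<Sum>c\<in>V. \<Prod>w\<in>S. F (cube_vertex x a b c (m w)))"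
  by (simp add: cube_sum_def prod.reindex inj_on_subset[of m UNIV])

lemma cube_invariant_cube_sum: "cube_invariant (cube_sum F)"
  unfolding cube_invariant_def
proof (intro allI conjI)
  fix S
  have "cube_sum F (flip1 ` S) =
      (\<Sum>x\<in>V. \<Sum>a\<in>V. \<Sum>b\<in>V. \<Sum>c\<in>V. \<Prod>w\<in>S. F (cube_vertex (x \<oplus> a) (uminus_V a) b c w))"
    by (simp add: cube_sum_image[OF inj_flip1] cube_vertex_flip1)
  also have "\<dots> = cube_sum F S"
    unfolding cube_sum_def by (rule sum_shear)
  finally show "cube_sum F (flip1 ` S) = cube_sum F S" .
  have "cube_sum F (swap12 ` S) = (\<Sum>x\<in>V. \<Sum>a\<in>V. \<Sum>b\<in>V. \<Sum>c\<in>V. \<Prod>w\<in>S. F (cube_vertex x b a c w))"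
    by (simp add: cube_sum_image[OF inj_swap12] cube_vertex_swap12)
  also have "\<dots> = cube_sum F S"
    unfolding cube_sum_def by (rule sum.cong[OF refl], rule sum.swap)
  finally show "cube_sum F (swap12 ` S) = cube_sum F S" .
  have "cube_sum F (swap23 ` S) = (\<Sum>x\<in>V. \<Sum>a\<in>V. \<Sum>b\<in>V. \<Sum>c\<in>V. \<Prod>w\<in>S. F (cube_vertex x a c b w))"
    by (simp add: cube_sum_image[OF inj_swap23] cube_vertex_swap23)
  also have "\<dots> = cube_sum F S"
    unfolding cube_sum_def by (rule sum.cong[OF refl], rule sum.cong[OF refl], rule sum.swap)
  finally show "cube_sum F (swap23 ` S) = cube_sum F S" .
qed

lemma gowers_pow_2_nonneg: "0 \<le> gowers_pow p n 2 f"
  by (simp add: gowers_pow_2_autocorr sum_nonneg)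

lemma gowers_norm_2_pow4: "gowers_norm p n 2 f ^ 4 = gowers_pow p n 2 f"
  using gowers_pow_2_nonneg[of f]
  by (cases "gowers_pow p n 2 f = 0") (simp_all add: gowers_norm_def powr_power)

lemma cube_sum_pow4_le_gowers:
  assumes f_bound: "\<And>x. x \<in> V \<Longrightarrow> \<bar>f x\<bar> \<le> 1"
    and top: "(True, True, True) \<notin> S" and upper: "\<exists>w\<in>S. snd (snd w)"
  shows "cube_sum f S ^ 4 \<le> N ^ 16 * gowers_pow p n 2 f"
proof -
  \<comment> \<open>Since \<open>(1,1,1) \<notin> S\<close>, at most three factors live on the face \<open>\<omega>\<^sub>3 = 1\<close>.\<close>
  define \<phi> where "\<phi> = (\<lambda>w y. if w \<in> S then f y else 1)"
  define P where "P x a b =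
    \<phi> (False, False, False) x * \<phi> (True, False, False) (x \<oplus> a) * \<phi> (False, True, False) (x \<oplus> b) *
    \<phi> (True, True, False) (x \<oplus> a \<oplus> b)" for x a b
  have "(\<Prod>w\<in>S. f (cube_vertex x a b c w)) = (\<Prod>w\<in>UNIV. \<phi> w (cube_vertex x a b c w))" for x a b c
    using prod.inter_restrict[of UNIV "\<lambda>w. f (cube_vertex x a b c w)" S] by (simp add: \<phi>_def)
  also have "\<dots> x a b c = P x a b *
      (\<phi> (False, False, True) (x \<oplus> c) * \<phi> (True, False, True) (x \<oplus> c \<oplus> a) * \<phi> (False, True, True) (x \<oplus> c \<oplus> b))"
    if "x \<in> V" for x a b c
    using that top
    by (simp add: prod_UNIV_bool_triple cube_vertex_def plus_bool_scale P_def \<phi>_def plus_V_ac mult_ac)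
  finally have "cube_sum f S = (\<Sum>x\<in>V. \<Sum>a\<in>V. \<Sum>b\<in>V. \<Sum>c\<in>V. P x a b *
      (\<phi> (False, False, True) (x \<oplus> c) * \<phi> (True, False, True) (x \<oplus> c \<oplus> a) * \<phi> (False, True, True) (x \<oplus> c \<oplus> b)))"
    unfolding cube_sum_def by (intro sum.cong refl) auto
  also have "\<dots> ^ 4 \<le> N ^ 16 * gowers_pow p n 2 f"
  proof (rule split_sum_pow4_le_gowers[OF f_bound])
    have "\<bar>\<phi> w y\<bar> \<le> 1" if "y \<in> V" for w y
      using f_bound[OF that] by (simp add: \<phi>_def)
    then show "\<bar>P x a b\<bar> \<le> 1" if "x \<in> V" for x a b
      unfolding P_def abs_mult using that by (intro mult_le_one abs_ge_zero) auto
    have factor: "\<phi> w \<in> {f, \<lambda>_. 1}" for w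
      by (cases "w \<in> S") (simp_all add: \<phi>_def)
    show "\<phi> (False, False, True) \<in> {f, \<lambda>_. 1}" "\<phi> (True, False, True) \<in> {f, \<lambda>_. 1}"
      "\<phi> (False, True, True) \<in> {f, \<lambda>_. 1}"
      by (fact factor)+
    obtain w where "w \<in> S" "snd (snd w)"
      using upper by blast
    with top have "w \<in> {(False, False, True), (True, False, True), (False, True, True)}"
      by (cases w) auto
    with \<open>w \<in> S\<close> show "f \<in> {\<phi> (False, False, True), \<phi> (True, False, True), \<phi> (False, True, True)}"
      by (auto simp: \<phi>_def)
  qed
  finally show ?thesis .
qed

lemma abs_cube_sum_le_gowers_norm:
  assumes f_bound: "\<And>x. x \<in> V \<Longrightarrow> \<bar>f x\<bar> \<le> 1" and "S \<noteq> {}" "S \<noteq> UNIV"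
  shows "\<bar>cube_sum f S\<bar> \<le> N ^ 4 * gowers_norm p n 2 f"
proof -
  obtain S' where "(True, True, True) \<notin> S'" "\<exists>w\<in>S'. snd (snd w)" "cube_sum f S' = cube_sum f S"
    using cube_invariant_normalize[OF cube_invariant_cube_sum assms(2,3)] .
  then have "\<bar>cube_sum f S\<bar> ^ 4 \<le> N ^ 16 * gowers_pow p n 2 f"
    using cube_sum_pow4_le_gowers[where f = f and S = S', OF f_bound] by (simp add: power_even_abs)
  also have "\<dots> = (N ^ 4 * gowers_norm p n 2 f) ^ 4"
    by (simp add: power_mult_distrib gowers_norm_2_pow4 flip: power_mult)
  finally show ?thesis
    by (subst (asm) power_mono_iff) (simp_all add: gowers_norm_def)
qed

lemma cube_vertex_closed [simp]: "cube_vertex x a b c w \<in> V"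
  by (simp add: cube_vertex_def)

lemma cube_sum_empty: "cube_sum F {} = N ^ 4"
  by (simp add: cube_sum_def power4_eq_xxxx)

lemma cube_sum_shift_expand:
  assumes g: "\<And>x. x \<in> V \<Longrightarrow> g x = t + f x"
  shows "cube_sum g UNIV = (\<Sum>S\<in>Pow UNIV. t ^ card (UNIV - S) * cube_sum f S)"
proof -
  have "(\<Prod>w\<in>UNIV. g (cube_vertex x a b c w)) =
      (\<Sum>S\<in>Pow UNIV. t ^ card (UNIV - S) * (\<Prod>w\<in>S. f (cube_vertex x a b c w)))" for x a b c
    using prod_add[of UNIV "\<lambda>w. f (cube_vertex x a b c w)" "\<lambda>_. t"]
    by (simp add: g add.commute mult.commute)
  then have "cube_sum g UNIV = (\<Sum>x\<in>V. \<Sum>a\<in>V. \<Sum>b\<in>V. \<Sum>c\<in>V. \<Sum>S\<in>Pow UNIV.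
      t ^ card (UNIV - S) * (\<Prod>w\<in>S. f (cube_vertex x a b c w)))"
    by (simp add: cube_sum_def)
  also have "\<dots> = (\<Sum>S\<in>Pow UNIV. \<Sum>x\<in>V. \<Sum>a\<in>V. \<Sum>b\<in>V. \<Sum>c\<in>V.
      t ^ card (UNIV - S) * (\<Prod>w\<in>S. f (cube_vertex x a b c w)))"
    by (subst (2) sum.swap, rule sum.cong[OF refl], subst (2) sum.swap, rule sum.cong[OF refl],
        subst (2) sum.swap, rule sum.cong[OF refl], rule sum.swap)
  finally show ?thesis
    by (simp add: cube_sum_def sum_distrib_left)
qed

lemma gowers_pow_3_shift_le:
  assumes f_bound: "\<And>x. x \<in> V \<Longrightarrow> \<bar>f x\<bar> \<le> 1" and "\<bar>t\<bar> \<le> 1"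
    and g: "\<And>x. x \<in> V \<Longrightarrow> g x = t + f x"
  shows "\<bar>gowers_pow p n 3 g - (t ^ 8 + gowers_pow p n 3 f)\<bar> \<le> 256 * gowers_norm p n 2 f"
proof -
  define E where "E = Pow (UNIV :: corner set) - {{}, UNIV}"
  have E: "Pow UNIV = insert {} (insert UNIV E)" "finite E" "{} \<notin> E" "UNIV \<notin> E"
    by (auto simp: E_def)
  have card_corners: "card (UNIV :: corner set) = 8"
    by (simp flip: UNIV_Times_UNIV add: card_cartesian_product)
  have "cube_sum g UNIV = (\<Sum>S\<in>insert {} (insert UNIV E). t ^ card (UNIV - S) * cube_sum f S)"
    by (simp only: cube_sum_shift_expand[OF g] E(1))
  also have "\<dots> = t ^ 8 * N ^ 4 + cube_sum f UNIV + (\<Sum>S\<in>E. t ^ card (UNIV - S) * cube_sum f S)"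
    using E(2-4) card_corners by (simp add: cube_sum_empty)
  finally have "gowers_pow p n 3 g - (t ^ 8 + gowers_pow p n 3 f) = (\<Sum>S\<in>E. t ^ card (UNIV - S) * cube_sum f S) / N ^ 4"
    using N_pos by (auto simp: gowers_pow_3_cube_sum add_divide_distrib)
  then have "\<bar>gowers_pow p n 3 g - (t ^ 8 + gowers_pow p n 3 f)\<bar> = \<bar>\<Sum>S\<in>E. t ^ card (UNIV - S) * cube_sum f S\<bar> / N ^ 4"
    by simp
  also have "\<dots> \<le> real (card E) * (N ^ 4 * gowers_norm p n 2 f) / N ^ 4"
  proof (intro divide_right_mono order_trans[OF sum_abs] sum_bounded_above)
    fix S assume "S \<in> E"
    then have "\<bar>cube_sum f S\<bar> \<le> N ^ 4 * gowers_norm p n 2 f"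
      by (intro abs_cube_sum_le_gowers_norm f_bound) (auto simp: E_def)
    moreover have "\<bar>t ^ card (UNIV - S)\<bar> \<le> 1"
      using \<open>\<bar>t\<bar> \<le> 1\<close> by (simp add: power_abs power_le_one)
    ultimately show "\<bar>t ^ card (UNIV - S) * cube_sum f S\<bar> \<le> N ^ 4 * gowers_norm p n 2 f"
      unfolding abs_mult by (meson abs_ge_zero mult_left_le_one_le order_trans)
  qed simp
  also have "\<dots> \<le> 256 * gowers_norm p n 2 f"
  proof -
    have "card E \<le> card (Pow (UNIV :: corner set))"
      by (rule card_mono) (auto simp: E_def)
    also have "\<dots> = 256"
      using card_corners by (simp add: card_Pow)
    finally show ?thesis
      using N_pos by (simp add: gowers_norm_def mult_right_mono)
  qed
  finally show ?thesis .
qed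

end

theorem theorem4p1:
  fixes p :: nat
  assumes "prime p" and "odd p"
  shows "\<forall>\<epsilon>>0. \<exists>c>0. \<forall>(n::nat) (f::(nat \<Rightarrow> nat) \<Rightarrow> real) (a::real) (g::(nat \<Rightarrow> nat) \<Rightarrow> real).
           (\<forall>x\<in>Fpn p n. f x \<in> {-1..1}) \<longrightarrow> gowers_norm p n 2 f \<le> c \<longrightarrow>
           a \<in> {-1..1} \<longrightarrow> (\<forall>x\<in>Fpn p n. g x = a + f x) \<longrightarrow>
           \<bar>gowers_pow p n 3 g - (a ^ 8 + gowers_pow p n 3 f)\<bar> \<le> \<epsilon>"
proof (intro allI impI)
  fix \<epsilon> :: real
  assume "\<epsilon> > 0"
  show "\<exists>c>0. \<forall>n f a g. (\<forall>x\<in>Fpn p n. f x \<in> {-1..1}) \<longrightarrow> gowers_norm p n 2 f \<le> c \<longrightarrow>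
      a \<in> {-1..1} \<longrightarrow> (\<forall>x\<in>Fpn p n. g x = a + f x) \<longrightarrow>
      \<bar>gowers_pow p n 3 g - (a ^ 8 + gowers_pow p n 3 f)\<bar> \<le> \<epsilon>"
  proof (intro exI[of _ "\<epsilon> / 256"] conjI allI impI)
    fix n f a g
    interpret Fpn_space p n
      using \<open>prime p\<close> by unfold_locales (rule prime_gt_0_nat)
    assume "\<forall>x\<in>Fpn p n. f x \<in> {-1..1}" "gowers_norm p n 2 f \<le> \<epsilon> / 256" "a \<in> {-1..1}"
      "\<forall>x\<in>Fpn p n. g x = a + f x"
    then have "\<bar>gowers_pow p n 3 g - (a ^ 8 + gowers_pow p n 3 f)\<bar> \<le> 256 * gowers_norm p n 2 f"
      by (intro gowers_pow_3_shift_le) (auto simp: abs_le_iff)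
    with \<open>gowers_norm p n 2 f \<le> \<epsilon> / 256\<close>
    show "\<bar>gowers_pow p n 3 g - (a ^ 8 + gowers_pow p n 3 f)\<bar> \<le> \<epsilon>"
      by simp
  qed (use \<open>\<epsilon> > 0\<close> in simp)
qed

end
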